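(* Let $A$ be a non-negative, irreducible $d\times d$ matrix with $\rho(A)>1$. Suppose $X$ is a local minimum of problem (P) and that the leading eigenvalue $1$ of $X$ is simple. Let $\mathbf u,\mathbf v\ge0$ be a left and a right leading eigenvector of $X$, i.e. $\mathbf u^TX=\mathbf u^T$ and $X\mathbf v=\mathbf v$. Then there exist a number $r>0$ and a non-negative matrix $\Lambda$ with $\Lambda\perp X$ such that $$A=X+r\,\mathbf u\,\mathbf v^T-\Lambda .$$
   Context: $\rho(\cdot)$ denotes spectral radius and $\|\cdot\|$ the Frobenius norm. The matrix inner product is $(X,Y)=\operatorname{tr}(X^TY)$, and $X\perp Y$ means $(X,Y)=0$; for non-negative matrices $\Lambda\perp X$ means $\Lambda$ vanishes wherever $X$ is positive. Problem (P) for a non-negative square matrix $A$ is: minimize $\|X-A\|$ subject to $X\ge0$ (entrywise) and $\rho(X)\le1$. A local minimum of (P) is a feasible $X$ for which there is a neighbourhood $U$ of $X$ with $\|Y-A\|\ge\|X-A\|$ for all feasible $Y\in U$. By Perron–Frobenius, a non-negative matrix has a non-negative eigenvector for the eigenvalue $\rho(X)$; this eigenvalue is called leading and the eigenvector a leading eigenvector. *)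

theory Defs
  imports "Jordan_Normal_Form.Spectral_Radius"
begin

definition nonneg_mat :: "real mat \<Rightarrow> bool" where
  "nonneg_mat X = (\<forall>i < dim_row X. \<forall>j < dim_col X. X $$ (i, j) \<ge> 0)"

definition nonneg_vec :: "real vec \<Rightarrow> bool" where
  "nonneg_vec x = (\<forall>i < dim_vec x. x $ i \<ge> 0)"

definition spec_rad :: "real mat \<Rightarrow> real" where
  "spec_rad X = spectral_radius (map_mat complex_of_real X)"

definition frob_norm :: "real mat \<Rightarrow> real" where
  "frob_norm X = sqrt (\<Sum>i < dim_row X. \<Sum>j < dim_col X. (X $$ (i, j))^2)"

definition irreducible_mat :: "real mat \<Rightarrow> bool" where
  "irreducible_mat A = (\<forall>i < dim_row A. \<forall>j < dim_row A. \<exists>k. (A ^\<^sub>m k) $$ (i, j) > 0)"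

definition feasible_P :: "nat \<Rightarrow> real mat \<Rightarrow> bool" where
  "feasible_P d X = (X \<in> carrier_mat d d \<and> nonneg_mat X \<and> spec_rad X \<le> 1)"

definition local_min_P :: "nat \<Rightarrow> real mat \<Rightarrow> real mat \<Rightarrow> bool" where
  "local_min_P d A X = (feasible_P d X \<and>
     (\<exists>e > 0. \<forall>Y. feasible_P d Y \<and> frob_norm (Y - X) < e \<longrightarrow>
        frob_norm (X - A) \<le> frob_norm (Y - A)))"

definition perp_nonneg :: "real mat \<Rightarrow> real mat \<Rightarrow> bool" where
  "perp_nonneg L X = (\<forall>i < dim_row X. \<forall>j < dim_col X. X $$ (i, j) > 0 \<longrightarrow> L $$ (i, j) = 0)"

definition outer_prod :: "real vec \<Rightarrow> real vec \<Rightarrow> real mat" where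
  "outer_prod u v = mat (dim_vec u) (dim_vec v) (\<lambda>(i, j). u $ i * v $ j)"

end

theory Submission
  imports Defs
begin

text \<open>
  Call a direction H admissible if H is non-negative wherever X vanishes. If moreover
  u^T H v < 0, then X + s H is feasible for small s > 0: since 1 is a simple eigenvalue,
  the range of I - X is the orthogonal complement of u, so (I - X) z = H v + \<alpha> 1 is solvable
  for a suitable \<alpha> > 0; a minimum principle makes z positive where v vanishes, and then
  v + s z is a positive vector with (X + s H)(v + s z) \<le> v + s z, which bounds the spectral
  radius by 1. Local minimality therefore gives \<langle>A - X, H\<rangle> \<le> 0 for all such H, and by
  tilting H towards -X also when only u^T H v \<le> 0. Testing this with directions that move
  weight between two entries shows A - X \<le> r u v^T entrywise, with equality on the support
  of X, for some r \<ge> 0; r = 0 would force A = X, contradicting \<rho>(A) > 1.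
\<close>

section \<open>Entrywise sums and the matrix inner product\<close>

lemma index_mult_mat_vec_sum:
  fixes A :: "'a :: comm_semiring_0 mat"
  assumes "A \<in> carrier_mat n m" "v \<in> carrier_vec m" "i < n"
  shows "(A *\<^sub>v v) $ i = (\<Sum>j<m. A $$ (i, j) * v $ j)"
  using assms by (auto simp: scalar_prod_def lessThan_atLeast0 intro: sum.cong)

lemma index_mult_mat_sum:
  fixes A B :: "'a :: comm_semiring_0 mat"
  assumes "A \<in> carrier_mat n m" "B \<in> carrier_mat m k" "i < n" "l < k"
  shows "(A * B) $$ (i, l) = (\<Sum>j<m. A $$ (i, j) * B $$ (j, l))"
  using assms by (auto simp: scalar_prod_def lessThan_atLeast0 intro: sum.cong)

definition mat_inner :: "real mat \<Rightarrow> real mat \<Rightarrow> real" where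
  "mat_inner G H = (\<Sum>i<dim_row G. \<Sum>j<dim_col G. G $$ (i, j) * H $$ (i, j))"

lemma mat_inner_carrier:
  "G \<in> carrier_mat n n \<Longrightarrow> mat_inner G H = (\<Sum>i<n. \<Sum>j<n. G $$ (i, j) * H $$ (i, j))"
  unfolding mat_inner_def by simp

lemma frob_norm_eq_sqrt_mat_inner: "frob_norm M = sqrt (mat_inner M M)"
  unfolding frob_norm_def mat_inner_def by (simp add: power2_eq_square)

lemma mat_inner_minus_right:
  assumes "G \<in> carrier_mat n n" "H \<in> carrier_mat n n" "K \<in> carrier_mat n n"
  shows "mat_inner G (H - K) = mat_inner G H - mat_inner G K"
proof -
  have "mat_inner G (H - K) = (\<Sum>i<n. \<Sum>j<n. G $$ (i, j) * H $$ (i, j) - G $$ (i, j) * K $$ (i, j))"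
    using assms by (auto simp: mat_inner_carrier algebra_simps intro!: sum.cong)
  thus ?thesis using assms by (simp add: mat_inner_carrier sum_subtractf)
qed

lemma mat_inner_smult_right:
  assumes "G \<in> carrier_mat n n" "H \<in> carrier_mat n n"
  shows "mat_inner G (c \<cdot>\<^sub>m H) = c * mat_inner G H"
proof -
  have "mat_inner G (c \<cdot>\<^sub>m H) = (\<Sum>i<n. \<Sum>j<n. c * (G $$ (i, j) * H $$ (i, j)))"
    using assms by (auto simp: mat_inner_carrier mult_ac intro!: sum.cong)
  thus ?thesis using assms by (simp add: mat_inner_carrier sum_distrib_left)
qed

lemma mat_inner_add_smult_self:
  assumes "M \<in> carrier_mat n n" "H \<in> carrier_mat n n"
  shows "mat_inner (M + s \<cdot>\<^sub>m H) (M + s \<cdot>\<^sub>m H)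
    = mat_inner M M + 2 * s * mat_inner M H + s\<^sup>2 * mat_inner H H"
proof -
  have sum: "M + s \<cdot>\<^sub>m H \<in> carrier_mat n n" using assms by simp
  have "mat_inner (M + s \<cdot>\<^sub>m H) (M + s \<cdot>\<^sub>m H) = (\<Sum>i<n. \<Sum>j<n.
      M $$ (i, j) * M $$ (i, j) + 2 * s * (M $$ (i, j) * H $$ (i, j)) + s\<^sup>2 * (H $$ (i, j) * H $$ (i, j)))"
    unfolding mat_inner_carrier[OF sum] using assms by (auto simp: power2_eq_square algebra_simps intro!: sum.cong)
  also have "\<dots> = mat_inner M M + 2 * s * mat_inner M H + s\<^sup>2 * mat_inner H H"
    using assms by (simp add: mat_inner_carrier sum.distrib sum_distrib_left)
  finally show ?thesis .
qed

lemma mat_inner_outer_prod: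
  assumes u: "u \<in> carrier_vec n" and v: "v \<in> carrier_vec n" and H: "H \<in> carrier_mat n n"
  shows "mat_inner (outer_prod u v) H = u \<bullet> (H *\<^sub>v v)"
proof -
  have "outer_prod u v \<in> carrier_mat n n" using u v by (simp add: outer_prod_def)
  hence "mat_inner (outer_prod u v) H = (\<Sum>i<n. \<Sum>j<n. outer_prod u v $$ (i, j) * H $$ (i, j))"
    by (rule mat_inner_carrier)
  also have "\<dots> = (\<Sum>i<n. \<Sum>j<n. u $ i * (H $$ (i, j) * v $ j))"
    using u v by (auto simp: outer_prod_def mult_ac intro!: sum.cong)
  also have "\<dots> = u \<bullet> (H *\<^sub>v v)"
    using u v H by (simp add: scalar_prod_def lessThan_atLeast0 index_mult_mat_vec_sum sum_distrib_left)
  finally show ?thesis .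
qed

section \<open>Principal minors and the simple eigenvalue 1\<close>

definition unit_row_col :: "'a :: zero_neq_one mat \<Rightarrow> nat \<Rightarrow> 'a mat" where
  "unit_row_col N i = mat (dim_row N) (dim_col N)
     (\<lambda>(a, b). if a = i \<or> b = i then (if a = b then 1 else 0) else N $$ (a, b))"

lemma unit_row_col_carrier [simp]: "unit_row_col N i \<in> carrier_mat n n \<longleftrightarrow> N \<in> carrier_mat n n"
  unfolding unit_row_col_def carrier_mat_def by simp

lemma det_unit_row_col:
  fixes N :: "'a :: comm_ring_1 mat"
  assumes N: "N \<in> carrier_mat n n" and i: "i < n"
  shows "det (unit_row_col N i) = det (mat_delete N i i)"
proof -
  let ?M = "unit_row_col N i"
  have "det ?M = (\<Sum>j<n. ?M $$ (i, j) * cofactor ?M i j)"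
    using N i by (intro laplace_expansion_row) simp_all
  also have "\<dots> = (\<Sum>j<n. if j = i then cofactor ?M i i else 0)"
    using N i by (intro sum.cong) (auto simp: unit_row_col_def)
  also have "\<dots> = det (mat_delete ?M i i)"
    using i by (simp add: cofactor_def flip: power_add mult_2)
  also have "mat_delete ?M i i = mat_delete N i i"
    using N i by (intro eq_matI) (auto simp: mat_delete_def unit_row_col_def)
  finally show ?thesis .
qed

lemma unit_row_col_mult_vec:
  fixes N :: "'a :: comm_ring_1 mat"
  assumes N: "N \<in> carrier_mat n n" and i: "i < n" and y: "y \<in> carrier_vec n" and y_i: "y $ i = 0"
  shows "unit_row_col N i *\<^sub>v y = vec n (\<lambda>a. if a = i then 0 else (N *\<^sub>v y) $ a)"
proof (rule eq_vecI)
  fix a assume "a < dim_vec (vec n (\<lambda>a. if a = i then 0 else (N *\<^sub>v y) $ a))"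
  hence a: "a < n" by simp
  have "(unit_row_col N i *\<^sub>v y) $ a = (\<Sum>b<n. unit_row_col N i $$ (a, b) * y $ b)"
    using N a y by (intro index_mult_mat_vec_sum) auto
  also have "\<dots>
      = (\<Sum>b<n. if a = i then (if b = i then y $ b else 0) else (if b = i then 0 else N $$ (a, b) * y $ b))"
    using N a by (intro sum.cong) (auto simp: unit_row_col_def)
  also have "\<dots> = (if a = i then 0 else \<Sum>b<n. N $$ (a, b) * y $ b)"
    using y_i i by (cases "a = i") (auto intro!: sum.cong)
  also have "\<dots> = (if a = i then 0 else (N *\<^sub>v y) $ a)"
    using index_mult_mat_vec_sum[OF N y a] by simp
  finally show "(unit_row_col N i *\<^sub>v y) $ a = vec n (\<lambda>a. if a = i then 0 else (N *\<^sub>v y) $ a) $ a"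
    using a by simp
qed (use N in \<open>simp add: unit_row_col_def\<close>)

lemma unit_row_col_mult_vec_same:
  fixes N :: "'a :: comm_ring_1 mat"
  assumes N: "N \<in> carrier_mat n n" and i: "i < n" and y: "y \<in> carrier_vec n"
  shows "(unit_row_col N i *\<^sub>v y) $ i = y $ i"
proof -
  have "(unit_row_col N i *\<^sub>v y) $ i = (\<Sum>b<n. unit_row_col N i $$ (i, b) * y $ b)"
    using N i y by (intro index_mult_mat_vec_sum) auto
  also have "\<dots> = (\<Sum>b<n. if b = i then y $ i else 0)"
    using N i by (intro sum.cong) (auto simp: unit_row_col_def)
  finally show ?thesis using i by simp
qed

lemma det_mat_delete_transpose:
  assumes "N \<in> carrier_mat n n"
  shows "det (mat_delete (transpose_mat N) i i) = det (mat_delete N i i)"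
proof -
  have "mat_delete (transpose_mat N) i i = transpose_mat (mat_delete N i i)"
    using assms by (intro eq_matI) (auto simp: mat_delete_def)
  thus ?thesis using det_transpose[OF mat_delete_carrier[OF assms]] by simp
qed

lemma principal_minor_kernel:
  fixes N :: "'a :: idom mat"
  assumes N: "N \<in> carrier_mat n n" and i: "i < n" and minor: "det (mat_delete N i i) \<noteq> 0"
    and y: "y \<in> carrier_vec n" and Ny: "N *\<^sub>v y = 0\<^sub>v n" and y_i: "y $ i = 0"
  shows "y = 0\<^sub>v n"
proof (rule ccontr)
  assume "y \<noteq> 0\<^sub>v n"
  moreover have "unit_row_col N i *\<^sub>v y = 0\<^sub>v n"
    unfolding unit_row_col_mult_vec[OF N i y y_i] Ny by auto
  ultimately have "det (unit_row_col N i) = 0"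
    using N y det_0_iff_vec_prod_zero[of "unit_row_col N i" n] by auto
  thus False using det_unit_row_col[OF N i] minor by simp
qed

lemma principal_minor_solve:
  fixes N :: "'a :: field mat"
  assumes N: "N \<in> carrier_mat n n" and i: "i < n" and minor: "det (mat_delete N i i) \<noteq> 0"
    and b: "b \<in> carrier_vec n"
  obtains z where "z \<in> carrier_vec n" "\<And>a. a < n \<Longrightarrow> a \<noteq> i \<Longrightarrow> (N *\<^sub>v z) $ a = b $ a"
proof -
  let ?M = "unit_row_col N i"
  define D where "D = det ?M"
  define b' where "b' = vec n (\<lambda>a. if a = i then 0 else b $ a)"
  define z where "z = (1 / D) \<cdot>\<^sub>v (adj_mat ?M *\<^sub>v b')"
  have M: "?M \<in> carrier_mat n n" using N by simp
  have D: "D \<noteq> 0" using det_unit_row_col[OF N i] minor by (simp add: D_def)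
  have adj: "adj_mat ?M \<in> carrier_mat n n" "?M * adj_mat ?M = D \<cdot>\<^sub>m 1\<^sub>m n"
    using adj_mat[OF M] by (auto simp: D_def)
  have z: "z \<in> carrier_vec n" using adj by (simp add: z_def b'_def)
  have b': "b' \<in> carrier_vec n" by (simp add: b'_def)
  have "?M *\<^sub>v z = (1 / D) \<cdot>\<^sub>v (?M *\<^sub>v (adj_mat ?M *\<^sub>v b'))"
    unfolding z_def using adj b' by (intro mult_mat_vec[OF M]) simp
  also have "?M *\<^sub>v (adj_mat ?M *\<^sub>v b') = (D \<cdot>\<^sub>m 1\<^sub>m n) *\<^sub>v b'"
    using assoc_mult_mat_vec[OF M adj(1) b'] by (simp add: adj(2))
  also have "\<dots> = D \<cdot>\<^sub>v b'"
    using b' by (intro eq_vecI) (auto simp: scalar_prod_def if_distrib[of "\<lambda>x. D * x"] if_distrib[of "\<lambda>x. x * _"] cong: if_cong)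
  also have "(1 / D) \<cdot>\<^sub>v (D \<cdot>\<^sub>v b') = b'"
    using D by (simp add: smult_smult_assoc)
  finally have Mz: "?M *\<^sub>v z = b'" .
  have z_i: "z $ i = 0"
    using unit_row_col_mult_vec_same[OF N i z] Mz i by (simp add: b'_def)
  show ?thesis
  proof (rule that[OF z])
    fix a assume "a < n" "a \<noteq> i"
    thus "(N *\<^sub>v z) $ a = b $ a"
      using unit_row_col_mult_vec[OF N i z z_i] Mz by (auto simp: b'_def dest: arg_cong[where f = "\<lambda>w. w $ a"])
  qed
qed

lemma sum_principal_minors_one_minus_nonzero:
  fixes X :: "'a :: field_char_0 mat"
  assumes X: "X \<in> carrier_mat n n" and n: "n > 0" and simple: "order 1 (char_poly X) = 1"
  shows "(\<Sum>i<n. det (mat_delete (1\<^sub>m n - X) i i)) \<noteq> 0"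
proof -
  have "degree (char_poly X) = n" using degree_monic_char_poly[OF X] by auto
  hence pd: "pderiv (char_poly X) \<noteq> 0" using n by (simp add: pderiv_eq_0_iff)
  have "order 1 (pderiv (char_poly X)) = 0"
    using order_pderiv2[OF pd, of 1 0] simple by auto
  hence nz: "poly (pderiv (char_poly X)) 1 \<noteq> 0" using pd order_root by blast
  have "poly (pderiv (char_poly X)) 1 = (\<Sum>i<n. poly (char_poly (mat_delete X i i)) 1)"
    unfolding pderiv_char_poly[OF X] poly_sum ..
  also have "\<dots> = (\<Sum>i<n. det (mat_delete (1\<^sub>m n - X) i i))"
  proof (rule sum.cong[OF refl])
    fix i assume "i \<in> {..<n}"
    hence "mat_delete (1\<^sub>m n - X) i i = - char_matrix (mat_delete X i i) 1"
      using X by (intro eq_matI) (auto simp: mat_delete_def char_matrix_def)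
    thus "poly (char_poly (mat_delete X i i)) 1 = det (mat_delete (1\<^sub>m n - X) i i)"
      using char_poly_matrix[OF mat_delete_carrier[OF X]] by simp
  qed
  finally show ?thesis using nz by simp
qed

lemma kernel_eq_smult_of_principal_minor:
  fixes N :: "'a :: field mat"
  assumes N: "N \<in> carrier_mat n n" and i: "i < n" and minor: "det (mat_delete N i i) \<noteq> 0"
    and v: "v \<in> carrier_vec n" "v $ i \<noteq> 0" "N *\<^sub>v v = 0\<^sub>v n"
    and y: "y \<in> carrier_vec n" "N *\<^sub>v y = 0\<^sub>v n"
  shows "y = (y $ i / v $ i) \<cdot>\<^sub>v v"
proof -
  define w where "w = y - (y $ i / v $ i) \<cdot>\<^sub>v v"
  have w: "w \<in> carrier_vec n" using v y by (simp add: w_def)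
  have "N *\<^sub>v w = 0\<^sub>v n"
    using N v y by (intro eq_vecI) (simp_all add: w_def mult_minus_distrib_mat_vec mult_mat_vec)
  moreover have "w $ i = 0" using v y i by (simp add: w_def)
  ultimately have w0: "w = 0\<^sub>v n" using principal_minor_kernel[OF N i minor w] by simp
  show ?thesis
  proof (rule eq_vecI)
    fix a assume "a < dim_vec ((y $ i / v $ i) \<cdot>\<^sub>v v)"
    hence "a < n" using v by simp
    hence "w $ a = 0" using w0 by simp
    thus "y $ a = ((y $ i / v $ i) \<cdot>\<^sub>v v) $ a" using \<open>a < n\<close> v y by (simp add: w_def)
  qed (use v y in simp)
qed

lemma adj_mat_rank_one:
  fixes N :: "'a :: field mat"
  assumes N: "N \<in> carrier_mat n n" and i: "i < n" and minor: "det (mat_delete N i i) \<noteq> 0"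
    and v: "v \<in> carrier_vec n" "v $ i \<noteq> 0" "N *\<^sub>v v = 0\<^sub>v n"
    and u: "u \<in> carrier_vec n" "u $ i \<noteq> 0" "transpose_mat N *\<^sub>v u = 0\<^sub>v n"
    and a: "a < n" and b: "b < n"
  shows "adj_mat N $$ (a, b) = adj_mat N $$ (i, i) / (v $ i * u $ i) * (v $ a * u $ b)"
proof -
  let ?M = "adj_mat N"
  have M: "?M \<in> carrier_mat n n" using adj_mat[OF N] by simp
  have "v \<noteq> 0\<^sub>v n" using v i by auto
  hence "det N = 0" using det_0_iff_vec_prod_zero[OF N] v by auto
  hence NM: "N * ?M = 0\<^sub>m n n" and MN: "?M * N = 0\<^sub>m n n"
    using adj_mat[OF N] by (auto intro!: eq_matI)
  have "N *\<^sub>v col ?M b = col (N * ?M) b" using col_mult2[OF N M b] by simp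
  also have "\<dots> = 0\<^sub>v n" using NM b by (intro eq_vecI) auto
  finally have "col ?M b = (?M $$ (i, b) / v $ i) \<cdot>\<^sub>v v"
    using kernel_eq_smult_of_principal_minor[OF N i minor v, of "col ?M b"] M i b by simp
  hence "col ?M b $ a = ((?M $$ (i, b) / v $ i) \<cdot>\<^sub>v v) $ a" by simp
  hence col: "?M $$ (a, b) = ?M $$ (i, b) / v $ i * v $ a" using M a b v by simp
  have Nt: "transpose_mat N \<in> carrier_mat n n" using N by simp
  have minor_t: "det (mat_delete (transpose_mat N) i i) \<noteq> 0"
    using det_mat_delete_transpose[OF N] minor by simp
  have "transpose_mat N *\<^sub>v row ?M i = col (transpose_mat N * transpose_mat ?M) i"
    using col_mult2[OF Nt _ i, of "transpose_mat ?M"] col_transpose[of i ?M] M i by simp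
  also have "\<dots> = col (transpose_mat (?M * N)) i" by (simp add: transpose_mult[OF M N])
  also have "\<dots> = 0\<^sub>v n" using MN i by (intro eq_vecI) auto
  finally have "row ?M i = (?M $$ (i, i) / u $ i) \<cdot>\<^sub>v u"
    using kernel_eq_smult_of_principal_minor[OF Nt i minor_t u, of "row ?M i"] M i by simp
  hence "row ?M i $ b = ((?M $$ (i, i) / u $ i) \<cdot>\<^sub>v u) $ b" by simp
  hence row: "?M $$ (i, b) = ?M $$ (i, i) / u $ i * u $ b" using M i b u by simp
  show ?thesis using col row by (simp add: mult_ac)
qed

lemma one_minus_mult_vec:
  fixes X :: "'a :: ring_1 mat"
  assumes "X \<in> carrier_mat n n" "v \<in> carrier_vec n"
  shows "(1\<^sub>m n - X) *\<^sub>v v = v - X *\<^sub>v v"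
  using assms by (simp add: minus_mult_distrib_mat_vec[OF one_carrier_mat])

lemma simple_eigenvalue_one_nonzero_minor:
  fixes X :: "'a :: field_char_0 mat"
  assumes "X \<in> carrier_mat n n" "n > 0" "order 1 (char_poly X) = 1"
  obtains i where "i < n" "det (mat_delete (1\<^sub>m n - X) i i) \<noteq> 0"
  using sum_principal_minors_one_minus_nonzero[OF assms] by (metis (no_types, lifting) lessThan_iff sum.neutral)

lemma simple_eigenvalue_one_inner_nonzero:
  fixes X :: "'a :: field_char_0 mat"
  assumes X: "X \<in> carrier_mat n n" and n: "n > 0" and simple: "order 1 (char_poly X) = 1"
    and u: "u \<in> carrier_vec n" "u \<noteq> 0\<^sub>v n" "transpose_mat X *\<^sub>v u = u"
    and v: "v \<in> carrier_vec n" "v \<noteq> 0\<^sub>v n" "X *\<^sub>v v = v"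
  shows "u \<bullet> v \<noteq> 0"
proof -
  define N where "N = 1\<^sub>m n - X"
  have N: "N \<in> carrier_mat n n" and Nt: "transpose_mat N \<in> carrier_mat n n"
    using X by (simp_all add: N_def minus_carrier_mat)
  have "transpose_mat N = 1\<^sub>m n - transpose_mat X"
    using X by (intro eq_matI) (auto simp: N_def)
  hence Nt_u: "transpose_mat N *\<^sub>v u = 0\<^sub>v n"
    using X u one_minus_mult_vec[of "transpose_mat X" n u] by simp
  have N_v: "N *\<^sub>v v = 0\<^sub>v n" using X v one_minus_mult_vec[OF X v(1)] by (simp add: N_def)
  obtain i where i: "i < n" and minor: "det (mat_delete N i i) \<noteq> 0"
    using simple_eigenvalue_one_nonzero_minor[OF X n simple] by (auto simp: N_def)
  have minor_t: "det (mat_delete (transpose_mat N) i i) \<noteq> 0"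
    using det_mat_delete_transpose[OF N] minor by simp
  have v_i: "v $ i \<noteq> 0" using principal_minor_kernel[OF N i minor v(1) N_v] v(2) by auto
  have u_i: "u $ i \<noteq> 0" using principal_minor_kernel[OF Nt i minor_t u(1) Nt_u] u(2) by auto
  define c where "c = adj_mat N $$ (i, i) / (v $ i * u $ i)"
  have "(\<Sum>a<n. det (mat_delete N a a)) = (\<Sum>a<n. adj_mat N $$ (a, a))"
    using N by (intro sum.cong) (simp_all add: adj_mat_def cofactor_def flip: power_add mult_2)
  also have "\<dots> = (\<Sum>a<n. c * (v $ a * u $ a))"
    using adj_mat_rank_one[OF N i minor v(1) v_i N_v u(1) u_i Nt_u] by (simp add: c_def)
  also have "\<dots> = c * (u \<bullet> v)"
    using u v by (simp add: scalar_prod_def lessThan_atLeast0 sum_distrib_left mult_ac)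
  finally show ?thesis
    using sum_principal_minors_one_minus_nonzero[OF X n simple] by (auto simp: N_def)
qed

lemma simple_eigenvalue_one_inner_pos:
  fixes X :: "real mat"
  assumes X: "X \<in> carrier_mat n n" and n: "n > 0" and simple: "order 1 (char_poly X) = 1"
    and u: "u \<in> carrier_vec n" "nonneg_vec u" "u \<noteq> 0\<^sub>v n" "transpose_mat X *\<^sub>v u = u"
    and v: "v \<in> carrier_vec n" "nonneg_vec v" "v \<noteq> 0\<^sub>v n" "X *\<^sub>v v = v"
  shows "u \<bullet> v > 0"
proof -
  have "u \<bullet> v \<ge> 0" using u v by (auto simp: scalar_prod_def nonneg_vec_def intro!: sum_nonneg)
  thus ?thesis using simple_eigenvalue_one_inner_nonzero[OF X n simple u(1,3,4) v(1,3,4)] by simp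
qed

lemma simple_eigenvalue_one_range:
  fixes X :: "'a :: field_char_0 mat"
  assumes X: "X \<in> carrier_mat n n" and n: "n > 0" and simple: "order 1 (char_poly X) = 1"
    and u: "u \<in> carrier_vec n" "u \<noteq> 0\<^sub>v n" "transpose_mat X *\<^sub>v u = u"
    and b: "b \<in> carrier_vec n" "u \<bullet> b = 0"
  obtains z where "z \<in> carrier_vec n" "z - X *\<^sub>v z = b"
proof -
  define N where "N = 1\<^sub>m n - X"
  have N: "N \<in> carrier_mat n n" and Nt: "transpose_mat N \<in> carrier_mat n n"
    using X by (simp_all add: N_def minus_carrier_mat)
  have "transpose_mat N = 1\<^sub>m n - transpose_mat X"
    using X by (intro eq_matI) (auto simp: N_def)
  hence Nt_u: "transpose_mat N *\<^sub>v u = 0\<^sub>v n"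
    using X u one_minus_mult_vec[of "transpose_mat X" n u] by simp
  obtain i where i: "i < n" and minor: "det (mat_delete N i i) \<noteq> 0"
    using simple_eigenvalue_one_nonzero_minor[OF X n simple] by (auto simp: N_def)
  have minor_t: "det (mat_delete (transpose_mat N) i i) \<noteq> 0"
    using det_mat_delete_transpose[OF N] minor by simp
  have u_i: "u $ i \<noteq> 0" using principal_minor_kernel[OF Nt i minor_t u(1) Nt_u] u(2) by auto
  obtain z where z: "z \<in> carrier_vec n"
    and off_i: "\<And>a. a < n \<Longrightarrow> a \<noteq> i \<Longrightarrow> (N *\<^sub>v z) $ a = b $ a"
    using principal_minor_solve[OF N i minor b(1)] by metis
  define w where "w = N *\<^sub>v z - b"
  have w: "w \<in> carrier_vec n" using N z b by (simp add: w_def)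
  have w_off: "w $ a = 0" if "a < n" "a \<noteq> i" for a
    using that off_i N z b by (simp add: w_def)
  have "u \<bullet> w = (\<Sum>a\<in>{0..<n}. if a = i then u $ i * w $ i else 0)"
    using w w_off unfolding scalar_prod_def by (intro sum.cong) auto
  hence "u $ i * w $ i = u \<bullet> w" using i by simp
  also have "\<dots> = (transpose_mat N *\<^sub>v u) \<bullet> z - u \<bullet> b"
    using N z b u by (simp add: w_def scalar_prod_minus_distrib transpose_vec_mult_scalar)
  also have "\<dots> = 0" using Nt_u z b by simp
  finally have "w $ i = 0" using u_i by simp
  hence "w $ a = 0" if "a < n" for a using w_off that by (cases "a = i") auto
  hence "N *\<^sub>v z = b" using N z b by (intro eq_vecI) (auto simp: w_def)
  thus ?thesis using that z one_minus_mult_vec[OF X z] by (simp add: N_def)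
qed

section \<open>Subinvariant vectors and the spectral radius\<close>

lemma pow_mat_Suc_left:
  fixes A :: "'a :: semiring_1 mat"
  assumes A: "A \<in> carrier_mat n n"
  shows "A ^\<^sub>m Suc k = A * A ^\<^sub>m k"
proof (induct k)
  case (Suc k)
  have "A ^\<^sub>m Suc (Suc k) = (A * A ^\<^sub>m k) * A" using Suc by simp
  also have "\<dots> = A * A ^\<^sub>m Suc k" using A by (simp add: assoc_mult_mat[of _ n n _ n _ n])
  finally show ?case .
qed (use A in simp)

lemma pow_mat_Suc_row_sum:
  fixes X :: "'a :: comm_semiring_1 mat"
  assumes X: "X \<in> carrier_mat n n" and i: "i < n"
  shows "(\<Sum>j<n. X $$ (i, j) * (\<Sum>l<n. (X ^\<^sub>m k) $$ (j, l))) = (\<Sum>l<n. (X ^\<^sub>m Suc k) $$ (i, l))"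
proof -
  have "(\<Sum>j<n. X $$ (i, j) * (\<Sum>l<n. (X ^\<^sub>m k) $$ (j, l)))
      = (\<Sum>l<n. \<Sum>j<n. X $$ (i, j) * (X ^\<^sub>m k) $$ (j, l))"
    unfolding sum_distrib_left by (rule sum.swap)
  also have "\<dots> = (\<Sum>l<n. (X ^\<^sub>m Suc k) $$ (i, l))"
    unfolding pow_mat_Suc_left[OF X]
    by (intro sum.cong refl) (rule index_mult_mat_sum[OF X pow_carrier_mat[OF X] i, symmetric], simp)
  finally show ?thesis .
qed

lemma nonneg_mat_pow:
  assumes X: "X \<in> carrier_mat n n" and nonneg: "nonneg_mat X"
  shows "nonneg_mat (X ^\<^sub>m k)"
proof (induct k)
  case (Suc k)
  have "(X ^\<^sub>m Suc k) $$ (i, j) \<ge> 0" if "i < n" "j < n" for i j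
  proof -
    have "(X ^\<^sub>m Suc k) $$ (i, j) = (\<Sum>l<n. (X ^\<^sub>m k) $$ (i, l) * X $$ (l, j))"
      using index_mult_mat_sum[OF pow_carrier_mat[OF X] X that] by simp
    also have "\<dots> \<ge> 0"
      using Suc nonneg X that by (intro sum_nonneg mult_nonneg_nonneg) (auto simp: nonneg_mat_def)
    finally show ?thesis .
  qed
  thus ?case using X by (simp add: nonneg_mat_def)
qed (use X in \<open>simp add: nonneg_mat_def\<close>)

lemma pow_mat_entries_poly_bound:
  fixes X :: "real mat"
  assumes X: "X \<in> carrier_mat n n" and rho: "spec_rad X \<le> 1"
  obtains c where "\<And>k i j. i < n \<Longrightarrow> j < n \<Longrightarrow> \<bar>(X ^\<^sub>m k) $$ (i, j)\<bar> \<le> c * max 1 (real k ^ (n - 1))"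
proof -
  let ?XC = "map_mat complex_of_real X"
  obtain c1 c2 where bound: "\<And>k. norm_bound (?XC ^\<^sub>m k) (c1 + c2 * real k ^ (n - 1))"
    using spectral_radius_jnf_norm_bound_le_1_upper_triangular[of ?XC n] X rho
    by (auto simp: spec_rad_def)
  show ?thesis
  proof (rule that[of "\<bar>c1\<bar> + \<bar>c2\<bar>"])
    fix k i j assume ij: "i < n" "j < n"
    have "?XC ^\<^sub>m k = map_mat complex_of_real (X ^\<^sub>m k)"
      by (rule of_real_hom.mat_hom_pow[OF X, symmetric])
    hence "\<bar>(X ^\<^sub>m k) $$ (i, j)\<bar> = norm ((?XC ^\<^sub>m k) $$ (i, j))" using ij X by simp
    also have "\<dots> \<le> c1 + c2 * real k ^ (n - 1)"
      using bound[of k] ij X unfolding norm_bound_def by auto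
    also have "\<dots> \<le> \<bar>c1\<bar> * max 1 (real k ^ (n - 1)) + \<bar>c2\<bar> * max 1 (real k ^ (n - 1))"
    proof (rule add_mono)
      show "c1 \<le> \<bar>c1\<bar> * max 1 (real k ^ (n - 1))"
        using mult_left_mono[of 1 "max 1 (real k ^ (n - 1))" "\<bar>c1\<bar>"] by simp
      show "c2 * real k ^ (n - 1) \<le> \<bar>c2\<bar> * max 1 (real k ^ (n - 1))"
        by (intro mult_mono) auto
    qed
    finally show "\<bar>(X ^\<^sub>m k) $$ (i, j)\<bar> \<le> (\<bar>c1\<bar> + \<bar>c2\<bar>) * max 1 (real k ^ (n - 1))"
      by (simp add: distrib_right)
  qed
qed

lemma pow_mat_row_sums_decay:
  fixes X :: "real mat"
  assumes X: "X \<in> carrier_mat n n" and rho: "spec_rad X \<le> 1" and b: "0 < b" "b < 1"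
  shows "eventually (\<lambda>k. \<forall>i<n. b ^ k * (\<Sum>j<n. (X ^\<^sub>m k) $$ (i, j)) \<le> 1) sequentially"
proof -
  obtain c where c: "\<And>k i j. i < n \<Longrightarrow> j < n \<Longrightarrow> \<bar>(X ^\<^sub>m k) $$ (i, j)\<bar> \<le> c * max 1 (real k ^ (n - 1))"
    using pow_mat_entries_poly_bound[OF X rho] by blast
  \<comment> \<open>Split b into two square roots: one absorbs the polynomial growth, the other decays.\<close>
  define r where "r = sqrt b"
  have r: "0 < r" "r < 1" "b = r * r" using b by (simp_all add: r_def)
  obtain P where P: "\<And>k. real n * c * r ^ k * max 1 (real k ^ (n - 1)) \<le> P"
    using poly_exp_max_constant_bound[of r "real n * c" "n - 1"] r by blast
  have "eventually (\<lambda>k. r ^ k < 1 / (\<bar>P\<bar> + 1)) sequentially"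
    using r by (intro order_tendstoD(2)[OF LIMSEQ_power_zero]) auto
  thus ?thesis
  proof eventually_elim
    case (elim k)
    show ?case
    proof (intro allI impI)
      fix i assume i: "i < n"
      have "b ^ k * (\<Sum>j<n. (X ^\<^sub>m k) $$ (i, j)) \<le> b ^ k * (\<Sum>j<n. c * max 1 (real k ^ (n - 1)))"
        using b c[OF i] by (intro mult_left_mono sum_mono) (auto intro: order.trans[OF abs_ge_self])
      also have "\<dots> = r ^ k * (real n * c * r ^ k * max 1 (real k ^ (n - 1)))"
        using r by (simp add: power_mult_distrib mult_ac)
      also have "\<dots> \<le> r ^ k * (\<bar>P\<bar> + 1)"
        using P[of k] r by (intro mult_left_mono) auto
      also have "\<dots> \<le> 1" using elim by (simp add: field_simps)
      finally show "b ^ k * (\<Sum>j<n. (X ^\<^sub>m k) $$ (i, j)) \<le> 1" .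
    qed
  qed
qed

lemma almost_subinvariant_vector:
  fixes X :: "real mat"
  assumes X: "X \<in> carrier_mat n n" and nonneg: "nonneg_mat X" and rho: "spec_rad X \<le> 1"
    and eps: "\<epsilon> > 0"
  obtains p where "\<And>i. i < n \<Longrightarrow> p i \<ge> 1"
    "\<And>i. i < n \<Longrightarrow> (\<Sum>j<n. X $$ (i, j) * p j) \<le> (1 + \<epsilon>) * p i"
proof -
  define b where "b = 1 / (1 + \<epsilon>)"
  have b: "0 < b" "b < 1" using eps by (simp_all add: b_def)
  define q where "q k i = (\<Sum>l<n. (X ^\<^sub>m k) $$ (i, l))" for k i
  obtain N where N: "N > 0" "\<And>i. i < n \<Longrightarrow> b ^ N * q N i \<le> 1"
    using eventually_conj[OF pow_mat_row_sums_decay[OF X rho b] eventually_gt_at_top[of 0]]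
    unfolding eventually_sequentially q_def by blast
  \<comment> \<open>A truncated Neumann series of b X applied to the all-ones vector.\<close>
  define p where "p i = (\<Sum>k<N. b ^ k * q k i)" for i
  have q0: "q 0 i = 1" if "i < n" for i
    using X that by (simp add: q_def sum.If_cases)
  have q_nonneg: "q k i \<ge> 0" if "i < n" for k i
    using nonneg_mat_pow[OF X nonneg, of k] X that
    unfolding q_def nonneg_mat_def by (intro sum_nonneg) auto
  have q_Suc: "(\<Sum>j<n. X $$ (i, j) * q k j) = q (Suc k) i" if "i < n" for k i
    unfolding q_def by (rule pow_mat_Suc_row_sum[OF X that])
  show ?thesis
  proof (rule that)
    fix i assume i: "i < n"
    have "p i = b ^ 0 * q 0 i + (\<Sum>k\<in>{..<N} - {0}. b ^ k * q k i)"
      unfolding p_def using N(1) by (meson finite_lessThan lessThan_iff sum.remove)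
    also have "\<dots> \<ge> 1" using q0[OF i] q_nonneg[OF i] b by (auto intro!: sum_nonneg)
    finally show "p i \<ge> 1" .
  next
    fix i assume i: "i < n"
    have "(\<Sum>j<n. X $$ (i, j) * p j) = (\<Sum>j<n. \<Sum>k<N. b ^ k * (X $$ (i, j) * q k j))"
      by (simp add: p_def sum_distrib_left mult_ac)
    also have "\<dots> = (\<Sum>k<N. \<Sum>j<n. b ^ k * (X $$ (i, j) * q k j))"
      by (rule sum.swap)
    also have "\<dots> = (\<Sum>k<N. b ^ k * q (Suc k) i)"
      using q_Suc[OF i] by (simp flip: sum_distrib_left)
    finally have "b * (\<Sum>j<n. X $$ (i, j) * p j) = (\<Sum>k<N. b ^ Suc k * q (Suc k) i)"
      by (simp add: sum_distrib_left mult_ac)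
    also have "\<dots> = (\<Sum>k<Suc N. b ^ k * q k i) - b ^ 0 * q 0 i"
      unfolding sum.lessThan_Suc_shift by simp
    also have "\<dots> = p i + b ^ N * q N i - 1" using q0[OF i] by (simp add: p_def)
    also have "\<dots> \<le> p i" using N(2)[OF i] by simp
    finally show "(\<Sum>j<n. X $$ (i, j) * p j) \<le> (1 + \<epsilon>) * p i"
      using eps by (simp add: b_def field_simps)
  qed
qed

lemma eigenvalue_norm_le_one_of_subinvariant:
  fixes Y :: "real mat"
  assumes Y: "Y \<in> carrier_mat n n" and nonneg: "nonneg_mat Y"
    and w_pos: "\<And>i. i < n \<Longrightarrow> w i > 0"
    and sub: "\<And>i. i < n \<Longrightarrow> (\<Sum>j<n. Y $$ (i, j) * w j) \<le> w i"
    and ev: "eigenvector (map_mat complex_of_real Y) x ev"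
  shows "norm ev \<le> 1"
proof -
  let ?YC = "map_mat complex_of_real Y"
  have x: "x \<in> carrier_vec n" "x \<noteq> 0\<^sub>v n" and Yx: "?YC *\<^sub>v x = ev \<cdot>\<^sub>v x"
    using ev Y unfolding eigenvector_def by auto
  define m where "m = Max ((\<lambda>i. norm (x $ i) / w i) ` {..<n})"
  obtain j where j: "j < n" "x $ j \<noteq> 0"
    using x by (metis carrier_vecD eq_vecI index_zero_vec)
  have "m \<in> (\<lambda>i. norm (x $ i) / w i) ` {..<n}"
    unfolding m_def using j by (intro Max_in) auto
  then obtain i where i: "i < n" "m = norm (x $ i) / w i" by auto
  have x_le: "norm (x $ l) \<le> m * w l" if "l < n" for l
  proof -
    have "norm (x $ l) / w l \<le> m" unfolding m_def using that by (intro Max_ge) auto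
    thus ?thesis using w_pos[OF that] by (simp add: field_simps)
  qed
  have "0 < norm (x $ j)" using j by simp
  also have "\<dots> \<le> m * w j" by (rule x_le[OF j(1)])
  finally have m_pos: "m > 0" using w_pos[OF j(1)] by (simp add: zero_less_mult_iff)
  hence x_i: "norm (x $ i) > 0" using i w_pos[OF i(1)] by (simp add: zero_less_divide_iff)
  have "ev * x $ i = (\<Sum>l<n. complex_of_real (Y $$ (i, l)) * x $ l)"
    using arg_cong[OF Yx, of "\<lambda>y. y $ i"] index_mult_mat_vec_sum[of ?YC n n x i] Y x i by simp
  hence "norm ev * norm (x $ i) = norm (\<Sum>l<n. complex_of_real (Y $$ (i, l)) * x $ l)"
    by (metis norm_mult)
  also have "\<dots> \<le> (\<Sum>l<n. Y $$ (i, l) * norm (x $ l))"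
    using nonneg Y i by (intro order.trans[OF norm_sum] eq_refl sum.cong)
      (auto simp: norm_mult nonneg_mat_def)
  also have "\<dots> \<le> (\<Sum>l<n. Y $$ (i, l) * (m * w l))"
    using nonneg Y i x_le by (intro sum_mono mult_left_mono) (auto simp: nonneg_mat_def)
  also have "\<dots> = m * (\<Sum>l<n. Y $$ (i, l) * w l)" by (simp add: sum_distrib_left mult_ac)
  also have "\<dots> \<le> m * w i" using sub[OF i(1)] m_pos by (intro mult_left_mono) auto
  also have "\<dots> = 1 * norm (x $ i)" using i w_pos[OF i(1)] by simp
  finally show ?thesis using x_i by (simp add: mult_le_cancel_right_pos)
qed

lemma spec_rad_le_one_of_subinvariant:
  fixes Y :: "real mat"
  assumes Y: "Y \<in> carrier_mat n n" and n: "n > 0" and nonneg: "nonneg_mat Y"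
    and w_pos: "\<And>i. i < n \<Longrightarrow> w i > 0"
    and sub: "\<And>i. i < n \<Longrightarrow> (\<Sum>j<n. Y $$ (i, j) * w j) \<le> w i"
  shows "spec_rad Y \<le> 1"
proof -
  let ?YC = "map_mat complex_of_real Y"
  have YC: "?YC \<in> carrier_mat n n" using Y by simp
  obtain ev where "ev \<in> spectrum ?YC" "spec_rad Y = norm ev"
    using spectral_radius_mem_max(1)[OF YC n] by (auto simp: spec_rad_def)
  moreover from this obtain x where "eigenvector ?YC x ev"
    unfolding spectrum_def eigenvalue_def by auto
  ultimately show ?thesis
    using eigenvalue_norm_le_one_of_subinvariant[OF Y nonneg w_pos sub] by simp
qed

section \<open>Supersolutions on closed index sets\<close>

lemma supersolution_min_ratio:
  fixes X :: "real mat"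
  assumes X: "X \<in> carrier_mat n n" and nonneg: "nonneg_mat X"
    and J: "J \<subseteq> {..<n}" and closed: "\<And>i j. i \<in> J \<Longrightarrow> j < n \<Longrightarrow> j \<notin> J \<Longrightarrow> X $$ (i, j) = 0"
    and super: "\<And>i. i \<in> J \<Longrightarrow> z i - (\<Sum>j<n. X $$ (i, j) * z j) \<ge> \<alpha>"
    and p_pos: "\<And>j. j \<in> J \<Longrightarrow> p j > 0"
    and Xp: "\<And>i. i \<in> J \<Longrightarrow> (\<Sum>j<n. X $$ (i, j) * p j) \<le> (1 + \<epsilon>) * p i"
    and i: "i \<in> J" "z i < 0"
  obtains i0 where "i0 \<in> J" "\<alpha> \<le> \<epsilon> * (- z i0)"
proof -
  define m where "m = Min ((\<lambda>j. z j / p j) ` J)"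
  have fin: "finite J" using J by (rule finite_subset) simp
  have "m \<in> (\<lambda>j. z j / p j) ` J" unfolding m_def using fin i by (intro Min_in) auto
  then obtain i0 where i0: "i0 \<in> J" "m = z i0 / p i0" by auto
  have i0_n: "i0 < n" using i0 J by auto
  have z_ge: "m * p j \<le> z j" if "j \<in> J" for j
  proof -
    have "m \<le> z j / p j" unfolding m_def using fin that by (intro Min_le) auto
    thus ?thesis using p_pos[OF that] by (simp add: field_simps)
  qed
  have m_neg: "m < 0" using z_ge[OF i(1)] i(2) p_pos[OF i(1)] by (smt (verit) mult_nonneg_nonneg)
  have z_i0: "z i0 = m * p i0" using i0 p_pos[OF i0(1)] by simp
  have "(1 + \<epsilon>) * z i0 \<le> m * (\<Sum>j<n. X $$ (i0, j) * p j)"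
    using Xp[OF i0(1)] m_neg by (simp add: z_i0 mult.left_commute mult_le_cancel_left)
  also have "\<dots> = (\<Sum>j<n. X $$ (i0, j) * (m * p j))" by (simp add: sum_distrib_left mult_ac)
  also have "\<dots> \<le> (\<Sum>j<n. X $$ (i0, j) * z j)"
  proof (rule sum_mono)
    fix j assume j: "j \<in> {..<n}"
    show "X $$ (i0, j) * (m * p j) \<le> X $$ (i0, j) * z j"
    proof (cases "j \<in> J")
      case True
      thus ?thesis using z_ge nonneg X i0_n j by (intro mult_left_mono) (auto simp: nonneg_mat_def)
    qed (use closed[OF i0(1)] j in simp)
  qed
  also have "\<dots> \<le> z i0 - \<alpha>" using super[OF i0(1)] by simp
  finally have "\<alpha> \<le> \<epsilon> * (- z i0)" by (simp add: algebra_simps)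
  thus ?thesis using that i0(1) by blast
qed

lemma supersolution_nonneg_on_closed_set:
  fixes X :: "real mat"
  assumes X: "X \<in> carrier_mat n n" and nonneg: "nonneg_mat X" and rho: "spec_rad X \<le> 1"
    and J: "J \<subseteq> {..<n}" and closed: "\<And>i j. i \<in> J \<Longrightarrow> j < n \<Longrightarrow> j \<notin> J \<Longrightarrow> X $$ (i, j) = 0"
    and super: "\<And>i. i \<in> J \<Longrightarrow> z i - (\<Sum>j<n. X $$ (i, j) * z j) \<ge> \<alpha>" and \<alpha>: "\<alpha> > 0"
    and i: "i \<in> J"
  shows "z i \<ge> 0"
proof (rule ccontr)
  assume "\<not> z i \<ge> 0"
  define S where "S = (\<Sum>j<n. \<bar>z j\<bar>)"
  define \<epsilon> where "\<epsilon> = \<alpha> / (1 + S)"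
  have S: "S \<ge> 0" by (simp add: S_def sum_nonneg)
  have eps: "\<epsilon> > 0" using \<alpha> S by (simp add: \<epsilon>_def)
  obtain p where p_ge: "\<And>i. i < n \<Longrightarrow> p i \<ge> 1"
    and Xp: "\<And>i. i < n \<Longrightarrow> (\<Sum>j<n. X $$ (i, j) * p j) \<le> (1 + \<epsilon>) * p i"
    using almost_subinvariant_vector[OF X nonneg rho eps] by blast
  obtain i0 where i0: "i0 \<in> J" "\<alpha> \<le> \<epsilon> * (- z i0)"
  proof (rule supersolution_min_ratio[OF X nonneg J closed super, of p \<epsilon> i])
    show "p j > 0" if "j \<in> J" for j using p_ge[of j] that J by force
    show "(\<Sum>j<n. X $$ (i, j) * p j) \<le> (1 + \<epsilon>) * p i" if "i \<in> J" for i using Xp that J by blast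
  qed (use i \<open>\<not> z i \<ge> 0\<close> in auto)
  have "\<epsilon> * (- z i0) \<le> \<epsilon> * S"
    using eps member_le_sum[of i0 "{..<n}" "\<lambda>j. \<bar>z j\<bar>"] i0(1) J
    by (intro mult_left_mono) (auto simp: S_def)
  moreover have "\<epsilon> * S < \<alpha>" using \<alpha> S by (simp add: \<epsilon>_def field_simps)
  ultimately show False using i0(2) by simp
qed

lemma supersolution_ge_on_closed_set:
  fixes X :: "real mat"
  assumes X: "X \<in> carrier_mat n n" and nonneg: "nonneg_mat X" and rho: "spec_rad X \<le> 1"
    and J: "J \<subseteq> {..<n}" and closed: "\<And>i j. i \<in> J \<Longrightarrow> j < n \<Longrightarrow> j \<notin> J \<Longrightarrow> X $$ (i, j) = 0"
    and super: "\<And>i. i \<in> J \<Longrightarrow> z i - (\<Sum>j<n. X $$ (i, j) * z j) \<ge> \<alpha>" and \<alpha>: "\<alpha> > 0"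
    and i: "i \<in> J"
  shows "z i \<ge> \<alpha>"
proof -
  have "(\<Sum>j<n. X $$ (i, j) * z j) \<ge> 0"
  proof (rule sum_nonneg)
    fix j assume j: "j \<in> {..<n}"
    show "X $$ (i, j) * z j \<ge> 0"
    proof (cases "j \<in> J")
      case True
      thus ?thesis
        using supersolution_nonneg_on_closed_set[OF X nonneg rho J closed super \<alpha> True]
          nonneg X i J j by (intro mult_nonneg_nonneg) (auto simp: nonneg_mat_def)
    qed (use closed[OF i] j in simp)
  qed
  thus ?thesis using super[OF i] by linarith
qed

section \<open>Feasible directions and first-order conditions\<close>

lemma nonneg_fixed_vector_zero_block:
  fixes X :: "real mat"
  assumes X: "X \<in> carrier_mat n n" "nonneg_mat X"
    and v: "v \<in> carrier_vec n" "nonneg_vec v" "X *\<^sub>v v = v"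
    and i: "i < n" "v $ i = 0" and j: "j < n" "v $ j \<noteq> 0"
  shows "X $$ (i, j) = 0"
proof -
  have terms: "\<forall>l\<in>{..<n}. X $$ (i, l) * v $ l \<ge> 0"
    using X v i by (auto simp: nonneg_mat_def nonneg_vec_def)
  have "(\<Sum>l<n. X $$ (i, l) * v $ l) = 0"
    using index_mult_mat_vec_sum[OF X(1) v(1) i(1)] v(3) i(2) by simp
  hence "\<forall>l\<in>{..<n}. X $$ (i, l) * v $ l = 0"
    using terms by (subst (asm) sum_nonneg_eq_0_iff) auto
  thus ?thesis using j by auto
qed

lemma frob_norm_smult: "frob_norm (c \<cdot>\<^sub>m H) = \<bar>c\<bar> * frob_norm H"
proof -
  have "frob_norm (c \<cdot>\<^sub>m H) = sqrt (c\<^sup>2 * (\<Sum>i<dim_row H. \<Sum>j<dim_col H. (H $$ (i, j))\<^sup>2))"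
    unfolding frob_norm_def by (simp add: power_mult_distrib sum_distrib_left)
  thus ?thesis by (simp add: frob_norm_def real_sqrt_mult)
qed

lemma eventually_nonneg_mat_add_smult:
  fixes X H :: "real mat"
  assumes X: "X \<in> carrier_mat n n" "nonneg_mat X" and H: "H \<in> carrier_mat n n"
    and H_zero: "\<And>i j. i < n \<Longrightarrow> j < n \<Longrightarrow> X $$ (i, j) = 0 \<Longrightarrow> H $$ (i, j) \<ge> 0"
  shows "eventually (\<lambda>s. nonneg_mat (X + s \<cdot>\<^sub>m H)) (at_right 0)"
proof -
  have "eventually (\<lambda>s. \<forall>i\<in>{..<n}. \<forall>j\<in>{..<n}. X $$ (i, j) + s * H $$ (i, j) \<ge> 0) (at_right 0)"
  proof (intro eventually_ball_finite ballI finite_lessThan)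
    fix i j assume ij: "i \<in> {..<n}" "j \<in> {..<n}"
    show "eventually (\<lambda>s. X $$ (i, j) + s * H $$ (i, j) \<ge> 0) (at_right 0)"
    proof (cases "X $$ (i, j) = 0")
      case True
      show ?thesis using eventually_at_right_less[of 0]
        by eventually_elim (use H_zero True ij in auto)
    next
      case False
      hence "X $$ (i, j) > 0" using X ij by (auto simp: nonneg_mat_def order.not_eq_order_implies_strict)
      moreover have "((\<lambda>s. X $$ (i, j) + s * H $$ (i, j)) \<longlongrightarrow> X $$ (i, j) + 0 * H $$ (i, j)) (at_right 0)"
        by (intro tendsto_intros)
      ultimately have "eventually (\<lambda>s. X $$ (i, j) + s * H $$ (i, j) > 0) (at_right 0)"
        by (intro order_tendstoD(1)) auto
      thus ?thesis by eventually_elim auto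
    qed
  qed
  thus ?thesis by eventually_elim (use X H in \<open>auto simp: nonneg_mat_def\<close>)
qed

lemma eventually_pos_add_smult:
  fixes v z :: "real vec"
  assumes v: "v \<in> carrier_vec n" "nonneg_vec v"
    and z_pos: "\<And>i. i < n \<Longrightarrow> v $ i = 0 \<Longrightarrow> z $ i > 0"
  shows "eventually (\<lambda>s. \<forall>i\<in>{..<n}. v $ i + s * z $ i > 0) (at_right 0)"
proof (intro eventually_ball_finite ballI finite_lessThan)
  fix i assume i: "i \<in> {..<n}"
  show "eventually (\<lambda>s. v $ i + s * z $ i > 0) (at_right 0)"
  proof (cases "v $ i > 0")
    case True
    have "((\<lambda>s. v $ i + s * z $ i) \<longlongrightarrow> v $ i + 0 * z $ i) (at_right 0)"
      by (intro tendsto_intros)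
    thus ?thesis using True by (intro order_tendstoD(1)) auto
  next
    case False
    hence "v $ i = 0" using v i by (auto simp: nonneg_vec_def)
    with z_pos[of i] i have "z $ i > 0" by simp
    show ?thesis using eventually_at_right_less[of 0]
      by eventually_elim (use \<open>v $ i = 0\<close> \<open>z $ i > 0\<close> in simp)
  qed
qed

lemma perturbed_mult_vec_entry:
  fixes X H :: "real mat" and v z :: "real vec"
  assumes X: "X \<in> carrier_mat n n" and H: "H \<in> carrier_mat n n"
    and v: "v \<in> carrier_vec n" "X *\<^sub>v v = v" and z: "z \<in> carrier_vec n" and i: "i < n"
    and z_eq: "z $ i - (X *\<^sub>v z) $ i = (H *\<^sub>v v) $ i + \<alpha>"
  shows "(\<Sum>j<n. (X + s \<cdot>\<^sub>m H) $$ (i, j) * (v $ j + s * z $ j))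
    = v $ i + s * z $ i - s * (\<alpha> - s * (H *\<^sub>v z) $ i)"
proof -
  have "(\<Sum>j<n. (X + s \<cdot>\<^sub>m H) $$ (i, j) * (v $ j + s * z $ j))
      = (X *\<^sub>v v) $ i + s * (X *\<^sub>v z) $ i + s * (H *\<^sub>v v) $ i + s * (s * (H *\<^sub>v z) $ i)"
    unfolding index_mult_mat_vec_sum[OF X v(1) i] index_mult_mat_vec_sum[OF X z i]
      index_mult_mat_vec_sum[OF H v(1) i] index_mult_mat_vec_sum[OF H z i]
    using X H i by (simp add: algebra_simps sum.distrib sum_distrib_left)
  also have "\<dots> = v $ i + s * z $ i - s * (\<alpha> - s * (H *\<^sub>v z) $ i)"
    using z_eq v(2) by (simp add: algebra_simps)
  finally show ?thesis .
qed

lemma eventually_feasible_P_along: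
  fixes X H :: "real mat" and v z :: "real vec"
  assumes feas: "feasible_P n X" and n: "n > 0" and H: "H \<in> carrier_mat n n"
    and H_zero: "\<And>i j. i < n \<Longrightarrow> j < n \<Longrightarrow> X $$ (i, j) = 0 \<Longrightarrow> H $$ (i, j) \<ge> 0"
    and v: "v \<in> carrier_vec n" "nonneg_vec v" "X *\<^sub>v v = v" and z: "z \<in> carrier_vec n" and \<alpha>: "\<alpha> > 0"
    and z_eq: "\<And>i. i < n \<Longrightarrow> z $ i - (X *\<^sub>v z) $ i = (H *\<^sub>v v) $ i + \<alpha>"
    and z_pos: "\<And>i. i < n \<Longrightarrow> v $ i = 0 \<Longrightarrow> z $ i > 0"
  shows "eventually (\<lambda>s. feasible_P n (X + s \<cdot>\<^sub>m H)) (at_right 0)"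
proof -
  have X: "X \<in> carrier_mat n n" "nonneg_mat X"
    using feas by (auto simp: feasible_P_def)
  have Hz_small: "eventually (\<lambda>s. \<forall>i\<in>{..<n}. s * (H *\<^sub>v z) $ i < \<alpha>) (at_right 0)"
  proof (intro eventually_ball_finite ballI finite_lessThan)
    fix i
    have "((\<lambda>s. s * (H *\<^sub>v z) $ i) \<longlongrightarrow> 0 * (H *\<^sub>v z) $ i) (at_right 0)"
      by (intro tendsto_intros)
    thus "eventually (\<lambda>s. s * (H *\<^sub>v z) $ i < \<alpha>) (at_right 0)"
      using \<alpha> by (intro order_tendstoD(2)) auto
  qed
  have nonneg_Y: "eventually (\<lambda>s. nonneg_mat (X + s \<cdot>\<^sub>m H)) (at_right 0)"
    using X H H_zero by (rule eventually_nonneg_mat_add_smult)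
  have pos_w: "eventually (\<lambda>s. \<forall>i\<in>{..<n}. v $ i + s * z $ i > 0) (at_right 0)"
    using v(1,2) z_pos by (rule eventually_pos_add_smult)
  show ?thesis using eventually_at_right_less[of 0] nonneg_Y pos_w Hz_small
  proof eventually_elim
    case (elim s)
    \<comment> \<open>v + s z is a positive subinvariant vector of X + s H.\<close>
    have "(\<Sum>j<n. (X + s \<cdot>\<^sub>m H) $$ (i, j) * (v $ j + s * z $ j)) \<le> v $ i + s * z $ i"
      if i: "i < n" for i
      using perturbed_mult_vec_entry[OF X(1) H v(1,3) z i z_eq[OF i], of s] elim i
      by (simp add: less_imp_le)
    hence "spec_rad (X + s \<cdot>\<^sub>m H) \<le> 1"
      using elim X H by (intro spec_rad_le_one_of_subinvariant[OF _ n, of _ "\<lambda>j. v $ j + s * z $ j"]) auto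
    thus ?case using X H elim by (simp add: feasible_P_def)
  qed
qed

lemma mat_inner_le_of_frob_norm_le:
  fixes A X H :: "real mat"
  assumes A: "A \<in> carrier_mat n n" and X: "X \<in> carrier_mat n n" and H: "H \<in> carrier_mat n n"
    and s: "s > 0" and le: "frob_norm (X - A) \<le> frob_norm (X + s \<cdot>\<^sub>m H - A)"
  shows "2 * mat_inner (A - X) H \<le> s * mat_inner H H"
proof -
  have "X + s \<cdot>\<^sub>m H - A = (X - A) + s \<cdot>\<^sub>m H" using X A H by (intro eq_matI) auto
  hence "mat_inner (X - A) (X - A) \<le> mat_inner ((X - A) + s \<cdot>\<^sub>m H) ((X - A) + s \<cdot>\<^sub>m H)"
    using le by (simp add: frob_norm_eq_sqrt_mat_inner)
  also have "\<dots> = mat_inner (X - A) (X - A) + 2 * s * mat_inner (X - A) H + s\<^sup>2 * mat_inner H H"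
    using X A H by (intro mat_inner_add_smult_self) (simp_all add: minus_carrier_mat)
  also have "mat_inner (X - A) H = (\<Sum>i<n. \<Sum>j<n. - ((A - X) $$ (i, j) * H $$ (i, j)))"
    unfolding mat_inner_carrier[OF minus_carrier_mat[OF A]] using X A
    by (intro sum.cong refl) (auto simp: algebra_simps)
  also have "\<dots> = - mat_inner (A - X) H"
    unfolding mat_inner_carrier[OF minus_carrier_mat[OF X]] by (simp add: sum_negf)
  finally show ?thesis using s by (simp add: power2_eq_square)
qed

lemma local_min_P_directional:
  fixes A X H :: "real mat"
  assumes locmin: "local_min_P n A X" and A: "A \<in> carrier_mat n n" and H: "H \<in> carrier_mat n n"
    and feas: "eventually (\<lambda>s. feasible_P n (X + s \<cdot>\<^sub>m H)) (at_right 0)"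
  shows "mat_inner (A - X) H \<le> 0"
proof (rule ccontr)
  define g where "g = mat_inner (A - X) H"
  assume "\<not> mat_inner (A - X) H \<le> 0"
  hence g: "g > 0" by (simp add: g_def)
  obtain e where e: "e > 0" and min: "\<And>Y. feasible_P n Y \<Longrightarrow> frob_norm (Y - X) < e
      \<Longrightarrow> frob_norm (X - A) \<le> frob_norm (Y - A)"
    using locmin unfolding local_min_P_def by blast
  have X: "X \<in> carrier_mat n n" using locmin by (simp add: local_min_P_def feasible_P_def)
  have close: "eventually (\<lambda>s. \<bar>s\<bar> * frob_norm H < e) (at_right 0)"
  proof -
    have "((\<lambda>s. \<bar>s\<bar> * frob_norm H) \<longlongrightarrow> \<bar>0\<bar> * frob_norm H) (at_right 0)"
      by (intro tendsto_intros)
    thus ?thesis using e by (intro order_tendstoD(2)) auto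
  qed
  have small: "eventually (\<lambda>s. s * mat_inner H H < 2 * g) (at_right 0)"
  proof -
    have "((\<lambda>s. s * mat_inner H H) \<longlongrightarrow> 0 * mat_inner H H) (at_right 0)"
      by (intro tendsto_intros)
    thus ?thesis using g by (intro order_tendstoD(2)) auto
  qed
  obtain s where s: "s > 0" "feasible_P n (X + s \<cdot>\<^sub>m H)" "\<bar>s\<bar> * frob_norm H < e"
      "s * mat_inner H H < 2 * g"
    using eventually_happens'[OF trivial_limit_at_right_real eventually_conj[OF
          eventually_at_right_less[of 0] eventually_conj[OF feas eventually_conj[OF close small]]]]
    by blast
  have "X + s \<cdot>\<^sub>m H - X = s \<cdot>\<^sub>m H" using X H by (intro eq_matI) auto
  hence "frob_norm (X + s \<cdot>\<^sub>m H - X) < e" using s(3) by (simp add: frob_norm_smult)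
  hence "frob_norm (X - A) \<le> frob_norm (X + s \<cdot>\<^sub>m H - A)" using min s(2) by blast
  hence "2 * g \<le> s * mat_inner H H"
    unfolding g_def by (rule mat_inner_le_of_frob_norm_le[OF A X H s(1)])
  thus False using s(4) by simp
qed

lemma simple_eigenvalue_one_shifted_range:
  fixes X :: "real mat" and u y :: "real vec"
  assumes X: "X \<in> carrier_mat n n" and n: "n > 0" and simple: "order 1 (char_poly X) = 1"
    and u: "u \<in> carrier_vec n" "nonneg_vec u" "u \<noteq> 0\<^sub>v n" "transpose_mat X *\<^sub>v u = u"
    and y: "y \<in> carrier_vec n" "u \<bullet> y < 0"
  obtains \<alpha> z where "\<alpha> > 0" "z \<in> carrier_vec n"
    "\<And>i. i < n \<Longrightarrow> z $ i - (X *\<^sub>v z) $ i = y $ i + \<alpha>"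
proof -
  define \<sigma> where "\<sigma> = (\<Sum>i<n. u $ i)"
  obtain k where k: "k < n" "u $ k \<noteq> 0" using u(1,3) by (metis carrier_vecD eq_vecI index_zero_vec)
  have "\<sigma> > 0" unfolding \<sigma>_def using u(1,2) k
    by (intro sum_pos2[of _ k]) (auto simp: nonneg_vec_def order.not_eq_order_implies_strict)
  \<comment> \<open>The shift makes the right-hand side orthogonal to u, i.e. puts it into the range of 1 - X.\<close>
  define \<alpha> where "\<alpha> = - (u \<bullet> y) / \<sigma>"
  have \<alpha>: "\<alpha> > 0" using y(2) \<open>\<sigma> > 0\<close> by (simp add: \<alpha>_def divide_neg_pos)
  define b where "b = y + vec n (\<lambda>_. \<alpha>)"
  have b: "b \<in> carrier_vec n" using y by (simp add: b_def)
  have "u \<bullet> vec n (\<lambda>_. \<alpha>) = \<alpha> * \<sigma>"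
    using u by (simp add: scalar_prod_def \<sigma>_def lessThan_atLeast0 sum_distrib_left mult_ac)
  hence "u \<bullet> b = 0" using u y \<open>\<sigma> > 0\<close> by (simp add: b_def scalar_prod_add_distrib \<alpha>_def)
  then obtain z where z: "z \<in> carrier_vec n" "z - X *\<^sub>v z = b"
    using simple_eigenvalue_one_range[OF X n simple u(1,3,4) b] by blast
  show ?thesis
  proof (rule that[OF \<alpha> z(1)])
    fix i assume i: "i < n"
    have "(z - X *\<^sub>v z) $ i = b $ i" using z(2) by simp
    thus "z $ i - (X *\<^sub>v z) $ i = y $ i + \<alpha>" using i X z(1) y(1) by (simp add: b_def)
  qed
qed

lemma eventually_feasible_P_descent:
  fixes X H :: "real mat" and u v :: "real vec"
  assumes feas: "feasible_P n X" and n: "n > 0" and simple: "order 1 (char_poly X) = 1"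
    and u: "u \<in> carrier_vec n" "nonneg_vec u" "u \<noteq> 0\<^sub>v n" "transpose_mat X *\<^sub>v u = u"
    and v: "v \<in> carrier_vec n" "nonneg_vec v" "X *\<^sub>v v = v"
    and H: "H \<in> carrier_mat n n"
    and H_zero: "\<And>i j. i < n \<Longrightarrow> j < n \<Longrightarrow> X $$ (i, j) = 0 \<Longrightarrow> H $$ (i, j) \<ge> 0"
    and descent: "u \<bullet> (H *\<^sub>v v) < 0"
  shows "eventually (\<lambda>s. feasible_P n (X + s \<cdot>\<^sub>m H)) (at_right 0)"
proof -
  have X: "X \<in> carrier_mat n n" "nonneg_mat X" and rho: "spec_rad X \<le> 1"
    using feas by (auto simp: feasible_P_def)
  obtain \<alpha> z where \<alpha>: "\<alpha> > 0" and z: "z \<in> carrier_vec n"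
    and z_eq: "\<And>i. i < n \<Longrightarrow> z $ i - (X *\<^sub>v z) $ i = (H *\<^sub>v v) $ i + \<alpha>"
    using simple_eigenvalue_one_shifted_range[OF X(1) n simple u, of "H *\<^sub>v v"] H v descent by auto
  let ?J = "{i. i < n \<and> v $ i = 0}"
  have closed: "X $$ (i, j) = 0" if "i \<in> ?J" "j < n" "j \<notin> ?J" for i j
    using nonneg_fixed_vector_zero_block[OF X v] that by auto
  have Hv: "(H *\<^sub>v v) $ i \<ge> 0" if i: "i \<in> ?J" for i
  proof -
    have "(\<Sum>j<n. H $$ (i, j) * v $ j) \<ge> 0"
    proof (rule sum_nonneg)
      fix j assume j: "j \<in> {..<n}"
      show "H $$ (i, j) * v $ j \<ge> 0"
      proof (cases "v $ j = 0")
        case False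
        thus ?thesis using H_zero closed[OF i] i j v(1,2) by (auto simp: nonneg_vec_def)
      qed simp
    qed
    thus ?thesis using index_mult_mat_vec_sum[OF H v(1)] i by simp
  qed
  have z_pos: "z $ i > 0" if "i < n" "v $ i = 0" for i
  proof -
    have "z $ i \<ge> \<alpha>"
    proof (rule supersolution_ge_on_closed_set[OF X rho _ closed _ \<alpha>])
      fix i assume "i \<in> ?J"
      thus "z $ i - (\<Sum>j<n. X $$ (i, j) * z $ j) \<ge> \<alpha>"
        using z_eq Hv index_mult_mat_vec_sum[OF X(1) z] by fastforce
    qed (use that in auto)
    thus ?thesis using \<alpha> by simp
  qed
  show ?thesis by (rule eventually_feasible_P_along[OF feas n H H_zero v z \<alpha> z_eq z_pos])
qed

lemma local_min_P_first_order:
  fixes A X H :: "real mat" and u v :: "real vec"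
  assumes n: "n > 0" and A: "A \<in> carrier_mat n n" and locmin: "local_min_P n A X"
    and simple: "order 1 (char_poly X) = 1"
    and u: "u \<in> carrier_vec n" "nonneg_vec u" "u \<noteq> 0\<^sub>v n" "transpose_mat X *\<^sub>v u = u"
    and v: "v \<in> carrier_vec n" "nonneg_vec v" "v \<noteq> 0\<^sub>v n" "X *\<^sub>v v = v"
    and H: "H \<in> carrier_mat n n"
    and H_zero: "\<And>i j. i < n \<Longrightarrow> j < n \<Longrightarrow> X $$ (i, j) = 0 \<Longrightarrow> H $$ (i, j) \<ge> 0"
    and nonincr: "u \<bullet> (H *\<^sub>v v) \<le> 0"
  shows "mat_inner (A - X) H \<le> 0"
proof -
  have feas: "feasible_P n X" using locmin by (simp add: local_min_P_def)
  hence X: "X \<in> carrier_mat n n" by (simp add: feasible_P_def)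
  have C: "outer_prod u v \<in> carrier_mat n n" using u v by (simp add: outer_prod_def)
  have AX: "A - X \<in> carrier_mat n n" using X by (rule minus_carrier_mat)
  have uv: "u \<bullet> v > 0" by (rule simple_eigenvalue_one_inner_pos[OF X n simple u v])
  \<comment> \<open>Tilting H towards -X turns it into a strict descent direction.\<close>
  have tilt: "mat_inner (A - X) H \<le> \<gamma> * mat_inner (A - X) X" if \<gamma>: "\<gamma> > 0" for \<gamma>
  proof -
    define H' where "H' = H - \<gamma> \<cdot>\<^sub>m X"
    have H': "H' \<in> carrier_mat n n" using H X by (simp add: H'_def minus_carrier_mat)
    have "u \<bullet> (H' *\<^sub>v v) = mat_inner (outer_prod u v) H - \<gamma> * mat_inner (outer_prod u v) X"
      using mat_inner_outer_prod[OF u(1) v(1) H'] C H X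
      by (simp add: H'_def mat_inner_minus_right mat_inner_smult_right)
    also have "\<dots> = u \<bullet> (H *\<^sub>v v) - \<gamma> * (u \<bullet> v)"
      using mat_inner_outer_prod[OF u(1) v(1)] H X v(4) by simp
    also have "\<dots> < 0" using mult_pos_pos[OF \<gamma> uv] nonincr by linarith
    finally have "mat_inner (A - X) H' \<le> 0"
      using H_zero X H by (intro local_min_P_directional[OF locmin A H']
          eventually_feasible_P_descent[OF feas n simple u v(1,2,4) H']) (auto simp: H'_def)
    moreover have "mat_inner (A - X) H' = mat_inner (A - X) H - \<gamma> * mat_inner (A - X) X"
      using mat_inner_minus_right[OF AX H, of "\<gamma> \<cdot>\<^sub>m X"] mat_inner_smult_right[OF AX X] X
      by (simp add: H'_def)
    ultimately show ?thesis by simp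
  qed
  have "((\<lambda>\<gamma>. \<gamma> * mat_inner (A - X) X) \<longlongrightarrow> 0 * mat_inner (A - X) X) (at_right 0)"
    by (intro tendsto_intros)
  moreover have "eventually (\<lambda>\<gamma>. mat_inner (A - X) H \<le> \<gamma> * mat_inner (A - X) X) (at_right 0)"
    using eventually_at_right_less[of 0] by eventually_elim (rule tilt)
  ultimately show ?thesis by (intro tendsto_lowerbound) auto
qed

section \<open>The multiplier\<close>

definition single_mat :: "nat \<Rightarrow> nat \<Rightarrow> nat \<Rightarrow> real mat" where
  "single_mat n i j = mat n n (\<lambda>(a, b). if a = i \<and> b = j then 1 else 0)"

lemma single_mat_carrier [simp]: "single_mat n i j \<in> carrier_mat n n"
  by (simp add: single_mat_def)

lemma mat_inner_single_mat:
  assumes G: "G \<in> carrier_mat n n" and ij: "i < n" "j < n"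
  shows "mat_inner G (single_mat n i j) = G $$ (i, j)"
proof -
  have "mat_inner G (single_mat n i j) = (\<Sum>a<n. if a = i then G $$ (a, j) else 0)"
    unfolding mat_inner_carrier[OF G] using ij
    by (intro sum.cong refl) (auto simp: single_mat_def if_distrib[of "\<lambda>x. _ * x"] cong: if_cong)
  thus ?thesis using ij by simp
qed

lemma proportional_of_cone_condition:
  fixes G C :: "real mat" and P :: "nat \<Rightarrow> nat \<Rightarrow> bool"
  assumes G: "G \<in> carrier_mat n n" and C: "C \<in> carrier_mat n n"
    and kl: "k < n" "l < n" "P k l" "C $$ (k, l) > 0"
    and cone: "\<And>H. H \<in> carrier_mat n n \<Longrightarrow>
      (\<And>i j. i < n \<Longrightarrow> j < n \<Longrightarrow> \<not> P i j \<Longrightarrow> H $$ (i, j) \<ge> 0) \<Longrightarrow>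
      mat_inner C H \<le> 0 \<Longrightarrow> mat_inner G H \<le> 0"
    and ij: "i < n" "j < n"
  shows "G $$ (i, j) \<le> G $$ (k, l) / C $$ (k, l) * C $$ (i, j)"
    and "P i j \<Longrightarrow> G $$ (i, j) = G $$ (k, l) / C $$ (k, l) * C $$ (i, j)"
proof -
  \<comment> \<open>Test directions moving mass between the entries (i, j) and (k, l) without changing the C-pairing.\<close>
  define H where "H = C $$ (k, l) \<cdot>\<^sub>m single_mat n i j - C $$ (i, j) \<cdot>\<^sub>m single_mat n k l"
  have H: "H \<in> carrier_mat n n" and mH: "(- 1) \<cdot>\<^sub>m H \<in> carrier_mat n n"
    by (simp_all add: H_def minus_carrier_mat)
  have H_entry: "H $$ (a, b) = (if a = i \<and> b = j then C $$ (k, l) else 0)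
      - (if a = k \<and> b = l then C $$ (i, j) else 0)" if "a < n" "b < n" for a b
    using that by (simp add: H_def single_mat_def)
  have inner: "mat_inner M H = C $$ (k, l) * M $$ (i, j) - C $$ (i, j) * M $$ (k, l)"
    if M: "M \<in> carrier_mat n n" for M
    using mat_inner_minus_right[OF M, of "C $$ (k, l) \<cdot>\<^sub>m single_mat n i j" "C $$ (i, j) \<cdot>\<^sub>m single_mat n k l"]
      mat_inner_smult_right[OF M] mat_inner_single_mat[OF M] kl ij by (simp add: H_def)
  have "mat_inner G H \<le> 0"
    using kl by (intro cone[OF H]) (auto simp: H_entry inner[OF C])
  thus le: "G $$ (i, j) \<le> G $$ (k, l) / C $$ (k, l) * C $$ (i, j)"
    using inner[OF G] kl by (simp add: field_simps)
  assume "P i j"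
  have "mat_inner G ((- 1) \<cdot>\<^sub>m H) \<le> 0"
  proof (rule cone[OF mH])
    fix a b assume "a < n" "b < n" "\<not> P a b"
    thus "((- 1) \<cdot>\<^sub>m H) $$ (a, b) \<ge> 0" using H \<open>P i j\<close> kl by (auto simp: H_entry)
  qed (simp add: mat_inner_smult_right[OF C H] inner[OF C])
  hence "G $$ (i, j) \<ge> G $$ (k, l) / C $$ (k, l) * C $$ (i, j)"
    using mat_inner_smult_right[OF G H] inner[OF G] kl by (simp add: field_simps)
  thus "G $$ (i, j) = G $$ (k, l) / C $$ (k, l) * C $$ (i, j)" using le by simp
qed

lemma mat_inner_pos_common_support:
  fixes C X :: "real mat"
  assumes C: "C \<in> carrier_mat n n" and X: "X \<in> carrier_mat n n" "nonneg_mat X"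
    and pos: "mat_inner C X > 0"
  obtains k l where "k < n" "l < n" "X $$ (k, l) > 0" "C $$ (k, l) > 0"
proof -
  have "\<exists>k<n. \<exists>l<n. C $$ (k, l) * X $$ (k, l) > 0"
  proof (rule ccontr)
    assume "\<not> ?thesis"
    hence "mat_inner C X \<le> 0"
      unfolding mat_inner_carrier[OF C] by (intro sum_nonpos) (meson lessThan_iff not_less)
    thus False using pos by simp
  qed
  then obtain k l where kl: "k < n" "l < n" and CX: "C $$ (k, l) * X $$ (k, l) > 0" by blast
  have "X $$ (k, l) \<ge> 0" using X kl by (auto simp: nonneg_mat_def)
  with CX have "X $$ (k, l) > 0" "C $$ (k, l) > 0" by (auto simp: zero_less_mult_iff)
  thus ?thesis using that kl by blast
qed

lemma mat_inner_eq_on_support: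
  fixes G C X :: "real mat"
  assumes G: "G \<in> carrier_mat n n" and C: "C \<in> carrier_mat n n"
    and X: "X \<in> carrier_mat n n" "nonneg_mat X"
    and eq: "\<And>i j. i < n \<Longrightarrow> j < n \<Longrightarrow> X $$ (i, j) > 0 \<Longrightarrow> G $$ (i, j) = r * C $$ (i, j)"
  shows "mat_inner G X = r * mat_inner C X"
proof -
  have "G $$ (i, j) * X $$ (i, j) = r * (C $$ (i, j) * X $$ (i, j))" if "i < n" "j < n" for i j
  proof (cases "X $$ (i, j) > 0")
    case False
    moreover have "X $$ (i, j) \<ge> 0" using X that by (auto simp: nonneg_mat_def)
    ultimately show ?thesis by simp
  qed (use eq[OF that] in simp)
  thus ?thesis
    unfolding mat_inner_carrier[OF G] mat_inner_carrier[OF C] sum_distrib_left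
    by (intro sum.cong refl) auto
qed

lemma local_min_P_multiplier:
  fixes A X :: "real mat" and u v :: "real vec"
  assumes n: "n > 0" and A: "A \<in> carrier_mat n n" and locmin: "local_min_P n A X"
    and simple: "order 1 (char_poly X) = 1"
    and u: "u \<in> carrier_vec n" "nonneg_vec u" "u \<noteq> 0\<^sub>v n" "transpose_mat X *\<^sub>v u = u"
    and v: "v \<in> carrier_vec n" "nonneg_vec v" "v \<noteq> 0\<^sub>v n" "X *\<^sub>v v = v"
  obtains r where "r \<ge> 0"
    "\<And>i j. i < n \<Longrightarrow> j < n \<Longrightarrow> A $$ (i, j) - X $$ (i, j) \<le> r * (u $ i * v $ j)"
    "\<And>i j. i < n \<Longrightarrow> j < n \<Longrightarrow> X $$ (i, j) > 0 \<Longrightarrow> A $$ (i, j) - X $$ (i, j) = r * (u $ i * v $ j)"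
proof -
  have X: "X \<in> carrier_mat n n" "nonneg_mat X"
    using locmin by (simp_all add: local_min_P_def feasible_P_def)
  let ?C = "outer_prod u v" and ?G = "A - X"
  have C: "?C \<in> carrier_mat n n" and G: "?G \<in> carrier_mat n n"
    using u v X by (simp_all add: outer_prod_def minus_carrier_mat)
  have CX: "mat_inner ?C X > 0"
    using simple_eigenvalue_one_inner_pos[OF X(1) n simple u v] mat_inner_outer_prod[OF u(1) v(1) X(1)] v(4)
    by simp
  have cone: "mat_inner ?G H \<le> 0"
    if "H \<in> carrier_mat n n" "\<And>i j. i < n \<Longrightarrow> j < n \<Longrightarrow> \<not> X $$ (i, j) > 0 \<Longrightarrow> H $$ (i, j) \<ge> 0"
      "mat_inner ?C H \<le> 0" for H
    using that X(2) local_min_P_first_order[OF n A locmin simple u v that(1)]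
      mat_inner_outer_prod[OF u(1) v(1) that(1)] by (simp add: nonneg_mat_def)
  obtain k l where kl: "k < n" "l < n" "X $$ (k, l) > 0" "?C $$ (k, l) > 0"
    using mat_inner_pos_common_support[OF C X CX] by blast
  define r where "r = ?G $$ (k, l) / ?C $$ (k, l)"
  have le: "?G $$ (i, j) \<le> r * ?C $$ (i, j)" if "i < n" "j < n" for i j
    using proportional_of_cone_condition(1)[where P = "\<lambda>i j. X $$ (i, j) > 0",
        OF G C kl cone that] by (simp add: r_def)
  have eq: "?G $$ (i, j) = r * ?C $$ (i, j)" if "i < n" "j < n" "X $$ (i, j) > 0" for i j
    using proportional_of_cone_condition(2)[where P = "\<lambda>i j. X $$ (i, j) > 0",
        OF G C kl cone that(1,2)] that(3) by (simp add: r_def)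
  have "mat_inner ?G ((- 1) \<cdot>\<^sub>m X) \<le> 0"
    using X CX by (intro cone) (auto simp: mat_inner_smult_right[OF C X(1)] nonneg_mat_def)
  hence "0 \<le> mat_inner ?G X" by (simp add: mat_inner_smult_right[OF G X(1)])
  also have "\<dots> = r * mat_inner ?C X"
    using eq by (intro mat_inner_eq_on_support[OF G C X])
  finally have "r \<ge> 0" using CX by (simp add: zero_le_mult_iff)
  show ?thesis
  proof (rule that[OF \<open>r \<ge> 0\<close>])
    fix i j assume ij: "i < n" "j < n"
    show "A $$ (i, j) - X $$ (i, j) \<le> r * (u $ i * v $ j)"
      using le[OF ij] ij A X u v by (simp add: outer_prod_def)
  next
    fix i j assume ij: "i < n" "j < n" and "X $$ (i, j) > 0"
    thus "A $$ (i, j) - X $$ (i, j) = r * (u $ i * v $ j)"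
      using eq[OF ij] A X u v by (simp add: outer_prod_def)
  qed
qed

theorem proposition1:
  fixes d :: nat and A X :: "real mat" and u v :: "real vec"
  assumes d: "d > 0"
    and A: "A \<in> carrier_mat d d" and A_nonneg: "nonneg_mat A"
    and A_irr: "irreducible_mat A" and A_rho: "spec_rad A > 1"
    and locmin: "local_min_P d A X"
    and X_rho: "spec_rad X = 1"
    and simple: "order 1 (char_poly X) = 1"
    and u: "u \<in> carrier_vec d" "nonneg_vec u" "u \<noteq> 0\<^sub>v d" "transpose_mat X *\<^sub>v u = u"
    and v: "v \<in> carrier_vec d" "nonneg_vec v" "v \<noteq> 0\<^sub>v d" "X *\<^sub>v v = v"
  shows "\<exists>r > 0. \<exists>L \<in> carrier_mat d d. nonneg_mat L \<and> perp_nonneg L X \<and>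
           A = X + r \<cdot>\<^sub>m outer_prod u v - L"
proof -
  obtain r where r: "r \<ge> 0"
    and le: "\<And>i j. i < d \<Longrightarrow> j < d \<Longrightarrow> A $$ (i, j) - X $$ (i, j) \<le> r * (u $ i * v $ j)"
    and eq: "\<And>i j. i < d \<Longrightarrow> j < d \<Longrightarrow> X $$ (i, j) > 0 \<Longrightarrow> A $$ (i, j) - X $$ (i, j) = r * (u $ i * v $ j)"
    using local_min_P_multiplier[OF d A locmin simple u v] by blast
  have X: "X \<in> carrier_mat d d" "nonneg_mat X" using locmin by (simp_all add: local_min_P_def feasible_P_def)
  have "r \<noteq> 0"
  proof
    assume "r = 0"
    hence "A = X" using A X A_nonneg le eq
      by (intro eq_matI) (fastforce simp: nonneg_mat_def order.not_eq_order_implies_strict)+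
    thus False using A_rho X_rho by simp
  qed
  define L where "L = X + r \<cdot>\<^sub>m outer_prod u v - A"
  have L: "L \<in> carrier_mat d d" using A by (simp add: L_def minus_carrier_mat)
  have L_entry: "L $$ (i, j) = r * (u $ i * v $ j) - (A $$ (i, j) - X $$ (i, j))" if "i < d" "j < d" for i j
    using that A X u v by (simp add: L_def outer_prod_def)
  have "A = X + r \<cdot>\<^sub>m outer_prod u v - L"
    using A X u v by (intro eq_matI) (auto simp: L_def outer_prod_def)
  moreover have "nonneg_mat L" using L le by (auto simp: nonneg_mat_def L_entry)
  moreover have "perp_nonneg L X" using X eq by (auto simp: perp_nonneg_def L_entry)
  ultimately show ?thesis using r \<open>r \<noteq> 0\<close> L
    by (intro exI[of _ r] conjI bexI[of _ L]) simp_all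
qed

end
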